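(* Let $\mathbf{G}\subseteq\mathrm{GL}(D)$ be a Lie group with Lie algebra $\mathfrak{g}$, let $L_1,\dots,L_l$ be a family of generators of $\mathfrak{g}$ (viewed as $D\times D$ matrices), and let $\tau$ be a representation of $\mathbf{G}$ on $\mathbb{K}^N$ ($\mathbb{K}\in\{\mathbb{R},\mathbb{C}\}$) with differential $d\tau$. Let $B_1,\dots,B_D\in M_{N\times N}(\mathbb{K})$. If the operator $\mathcal{D}_B=\sum_j B_j\partial/\partial x_j+mE$ is covariant with respect to $\tau$, then $$\sum_{k=1}^D (L_\alpha)_{jk}B_k=[B_j,d\tau(L_\alpha)]\qquad\forall\alpha\in\{1,\dots,l\},\ \forall j\in\{1,\dots,D\}.$$ If $\mathbf{G}$ is connected, this condition is also sufficient for covariance of $\mathcal{D}_B$ with respect to $\tau$.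
   Context: $\mathcal{D}_B$ (with $E$ the identity matrix, $m\in\mathbb{R}$) is called covariant with respect to $\tau$ if $\sum_{k=1}^D g_{jk}\,\tau(g)B_k\tau(g^{-1})=B_j$ for all $j$ and all $g\in\mathbf{G}$, equivalently if $\mathcal{D}_B$ commutes with all operators $(T_gf)(x)=\tau(g)f(g^{-1}x)$ on $C^\infty(\mathbb{R}^D,\mathbb{K}^N)$. *)

theory Defs
  imports "HOL-Analysis.Analysis"
begin

text \<open>Real D x D matrices are modelled as real^'D^'D with 'D a finite index type
  (so D = CARD('D)); K^N-matrices as 'k^'N^'N with 'k a real normed field (R or C).\<close>

fun matpow :: "'a::semiring_1^'n^'n \<Rightarrow> nat \<Rightarrow> 'a^'n^'n" where
  "matpow A 0 = mat 1"
| "matpow A (Suc n) = A ** matpow A n"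

definition mexp :: "real^'n^'n \<Rightarrow> real^'n^'n" where
  "mexp X = (\<Sum>n. (1 / fact n) *\<^sub>R matpow X n)"

definition GL :: "('a::semiring_1^'n^'n) set" where
  "GL = {A. invertible A}"

definition matrix_lie_group :: "(real^'n^'n) set \<Rightarrow> bool" where
  "matrix_lie_group G \<longleftrightarrow> G \<subseteq> GL \<and> mat 1 \<in> G
     \<and> (\<forall>g\<in>G. \<forall>h\<in>G. g ** h \<in> G) \<and> (\<forall>g\<in>G. matrix_inv g \<in> G)
     \<and> closedin (top_of_set GL) G"

definition lie_algebra :: "(real^'n^'n) set \<Rightarrow> (real^'n^'n) set" where
  "lie_algebra G = {X. \<forall>t::real. mexp (t *\<^sub>R X) \<in> G}"

definition representation ::
    "(real^'n^'n) set \<Rightarrow> (real^'n^'n \<Rightarrow> 'k::real_normed_field^'m^'m) \<Rightarrow> bool" where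
  "representation G \<tau> \<longleftrightarrow> continuous_on G \<tau> \<and> (\<forall>g\<in>G. \<tau> g \<in> GL)
     \<and> (\<forall>g\<in>G. \<forall>h\<in>G. \<tau> (g ** h) = \<tau> g ** \<tau> h)"

definition dtau ::
    "(real^'n^'n \<Rightarrow> 'k::real_normed_field^'m^'m) \<Rightarrow> real^'n^'n \<Rightarrow> 'k^'m^'m" where
  "dtau \<tau> X = vector_derivative (\<lambda>t::real. \<tau> (mexp (t *\<^sub>R X))) (at 0)"

text \<open>Covariance of D_B = sum_j B_j d/dx_j + mE with respect to tau
  (the mass term m E plays no role in the condition).\<close>
definition covariant ::
    "(real^'n^'n) set \<Rightarrow> (real^'n^'n \<Rightarrow> 'k::real_normed_field^'m^'m)
       \<Rightarrow> ('n \<Rightarrow> 'k^'m^'m) \<Rightarrow> bool" where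
  "covariant G \<tau> B \<longleftrightarrow> (\<forall>g\<in>G. \<forall>j.
      (\<Sum>k\<in>UNIV. (g $ j $ k) *\<^sub>R (\<tau> g ** B k ** \<tau> (matrix_inv g))) = B j)"

end

theory Submission
  imports Defs
begin

text \<open>
  Covariance says that B = (B_1, ..., B_D) is fixed by the action
  (g B)_j = sum_k g_jk tau(g) B_k tau(g)^-1 of G. Differentiating t \<mapsto> exp(tX) B at t = 0
  gives sum_k X_jk B_k + [d tau(X), B_j], whence the necessity of the condition. Conversely,
  if this derivative vanishes, the group law exp((t + s)X) = exp(tX) exp(sX) makes it vanish
  for every t, so the stabiliser H of B contains all exp(t L_alpha). Splitting a matrix A into
  its projection P A onto span{L_alpha} and the rest, the map
  A \<mapsto> (prod_alpha exp(c_alpha(A) L_alpha)) exp(A - P A) has derivative the identity at 0,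
  so the image of every ball around 0 contains a neighbourhood of 1; as in the proof of the
  closed subgroup theorem, an element exp(Y) of G with Y small in the kernel of P has Y = 0. Hence H contains a neighbourhood of 1 in G, so it is open in G; it is also closed,
  and therefore H = G when G is connected.
\<close>

section \<open>Exponential series in a Banach algebra\<close>

lemma norm_power_add_diff_le:
  fixes x h :: "'a::real_normed_algebra_1"
  shows "norm ((x + h) ^ n - x ^ n) \<le> (norm x + norm h) ^ n - norm x ^ n"
proof (induction n)
  case 0
  then show ?case by simp
next
  case (Suc n)
  have "norm ((x + h) ^ Suc n - x ^ Suc n) = norm ((x + h) * ((x + h) ^ n - x ^ n) + h * x ^ n)"
    by (simp add: algebra_simps)
  also have "\<dots> \<le> norm (x + h) * norm ((x + h) ^ n - x ^ n) + norm h * norm (x ^ n)"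
    by (intro order_trans[OF norm_triangle_ineq] add_mono norm_mult_ineq)
  also have "\<dots> \<le> (norm x + norm h) * ((norm x + norm h) ^ n - norm x ^ n) + norm h * norm x ^ n"
    by (intro add_mono mult_mono Suc.IH norm_triangle_ineq mult_left_mono norm_power_ineq) auto
  also have "\<dots> = (norm x + norm h) ^ Suc n - norm x ^ Suc n"
    by (simp add: algebra_simps)
  finally show ?case .
qed

lemma norm_exp_add_diff_le:
  fixes x h :: "'a::{real_normed_algebra_1,banach}"
  shows "norm (exp (x + h) - exp x) \<le> exp (norm x + norm h) - exp (norm x)"
proof (rule norm_sums_le)
  show "(\<lambda>n. (x + h) ^ n /\<^sub>R fact n - x ^ n /\<^sub>R fact n) sums (exp (x + h) - exp x)"
    "(\<lambda>n. (norm x + norm h) ^ n /\<^sub>R fact n - norm x ^ n /\<^sub>R fact n)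
       sums (exp (norm x + norm h) - exp (norm x))"
    by (intro sums_diff exp_converges)+
  show "norm ((x + h) ^ n /\<^sub>R fact n - x ^ n /\<^sub>R fact n)
      \<le> (norm x + norm h) ^ n /\<^sub>R fact n - norm x ^ n /\<^sub>R fact n" for n
    using divide_right_mono[OF norm_power_add_diff_le[of x h n], of "fact n"]
    by (simp add: scaleR_diff_right[symmetric] divide_simps)
qed

lemma norm_exp_minus_1_minus_le:
  fixes h :: "'a::{real_normed_algebra_1,banach}"
  shows "norm (exp h - 1 - h) \<le> norm h ^ 2 * exp (norm h)"
proof (rule norm_sums_le)
  have "summable (\<lambda>n. h ^ (n + 2) /\<^sub>R fact (n + 2))"
    by (rule summable_ignore_initial_segment[OF summable_exp_generic])
  then show "(\<lambda>n. inverse (fact (n + 2)) *\<^sub>R h ^ (n + 2)) sums (exp h - 1 - h)"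
    using exp_first_two_terms[of h] by (simp add: summable_sums)
  show "(\<lambda>n. norm h ^ 2 * (norm h ^ n /\<^sub>R fact n)) sums (norm h ^ 2 * exp (norm h))"
    by (intro sums_mult exp_converges)
  fix n
  have term_bound: "norm (inverse (fact m) *\<^sub>R h ^ m) \<le> inverse (fact m) * norm h ^ m" for m
    by (simp add: mult_left_mono norm_power_ineq)
  have "fact n \<le> (fact (n + 2) :: real)"
    by (rule fact_mono) simp
  have "norm (inverse (fact (n + 2)) *\<^sub>R h ^ (n + 2))
      \<le> inverse (fact (n + 2)) * norm h ^ (n + 2)"
    by (fact term_bound)
  also have "\<dots> \<le> inverse (fact n) * norm h ^ (n + 2)"
    using \<open>fact n \<le> fact (n + 2)\<close> by (intro mult_right_mono le_imp_inverse_le) auto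
  also have "\<dots> = norm h ^ 2 * (norm h ^ n /\<^sub>R fact n)"
    by (simp only: power_add) (simp add: divide_inverse)
  finally show "norm (inverse (fact (n + 2)) *\<^sub>R h ^ (n + 2))
      \<le> norm h ^ 2 * (norm h ^ n /\<^sub>R fact n)" .
qed

lemma isCont_exp_algebra: "isCont exp (x :: 'a::{real_normed_algebra_1,banach})"
proof -
  have "((\<lambda>h::'a. exp (norm x + norm h) - exp (norm x))
      \<longlongrightarrow> exp (norm x + norm (0::'a)) - exp (norm x)) (at 0)"
    by (intro tendsto_intros)
  then have "((\<lambda>h::'a. exp (norm x + norm h) - exp (norm x)) \<longlongrightarrow> 0) (at 0)"
    by simp
  then have "((\<lambda>h::'a. exp (x + h) - exp x) \<longlongrightarrow> 0) (at 0)"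
    by (rule Lim_null_comparison[rotated]) (simp add: norm_exp_add_diff_le)
  then show ?thesis
    unfolding isCont_def by (simp add: LIM_offset_zero_iff LIM_zero_iff)
qed

lemma has_derivative_exp_0:
  "(exp has_derivative (\<lambda>h. h)) (at (0 :: 'a::{real_normed_algebra_1,banach}))"
  unfolding has_derivative_at
proof (intro conjI bounded_linear_ident)
  have bound: "norm (exp h - 1 - h) / norm h \<le> norm h * exp (norm h)"
    if "h \<noteq> 0" for h :: 'a
  proof -
    have "norm (exp h - 1 - h) \<le> norm h * (norm h * exp (norm h))"
      using norm_exp_minus_1_minus_le[of h] by (simp add: power2_eq_square)
    with that show ?thesis
      by (simp add: divide_le_eq mult.commute)
  qed
  have ev: "\<forall>\<^sub>F h in at (0::'a).
      norm (norm (exp (0 + h) - exp 0 - h) / norm h) \<le> norm h * exp (norm h)"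
    by (rule eventually_mono[OF eventually_neq_at_within[of 0]]) (simp add: bound)
  have "((\<lambda>h::'a. norm h * exp (norm h)) \<longlongrightarrow> norm (0::'a) * exp (norm (0::'a))) (at 0)"
    by (intro tendsto_intros)
  then have "((\<lambda>h::'a. norm h * exp (norm h)) \<longlongrightarrow> 0) (at 0)"
    by simp
  then show "((\<lambda>h. norm (exp (0 + h) - exp 0 - h) / norm h) \<longlongrightarrow> 0) (at (0::'a))"
    by (rule Lim_null_comparison[OF ev])
qed

lemma matrix_inv_right: "invertible A \<Longrightarrow> A ** matrix_inv A = mat 1"
  and matrix_inv_left: "invertible A \<Longrightarrow> matrix_inv A ** A = mat 1"
  unfolding invertible_def matrix_inv_def by (metis (mono_tags, lifting) someI_ex)+

lemma matrix_inv_unique: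
  fixes A B :: "'a::semiring_1^'n^'n"
  assumes "A ** B = mat 1" "B ** A = mat 1"
  shows "matrix_inv A = B"
proof -
  have "invertible A"
    using assms by (auto simp: invertible_def)
  then have "B = B ** (A ** matrix_inv A)"
    by (simp add: matrix_inv_right)
  then show ?thesis
    by (simp add: matrix_mul_assoc assms)
qed

lemma matrix_inv_matrix_mul:
  fixes A B :: "'a::semiring_1^'n^'n"
  assumes "invertible A" "invertible B"
  shows "matrix_inv (A ** B) = matrix_inv B ** matrix_inv A"
proof (rule matrix_inv_unique)
  have "A ** (B ** matrix_inv B) ** matrix_inv A = mat 1"
    "matrix_inv B ** (matrix_inv A ** A) ** B = mat 1"
    using assms by (simp_all add: matrix_inv_left matrix_inv_right)
  then show "A ** B ** (matrix_inv B ** matrix_inv A) = mat 1"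
    "matrix_inv B ** matrix_inv A ** (A ** B) = mat 1"
    by (simp_all add: matrix_mul_assoc)
qed

lemma matrix_inv_mat_1: "matrix_inv (mat 1 :: 'a::semiring_1^'n^'n) = mat 1"
  by (rule matrix_inv_unique) simp_all

lemma mat_1_nth: "(mat 1 :: 'a::zero_neq_one^'n^'n) $ i $ j = (if i = j then 1 else 0)"
  by (simp add: mat_def)

lemma matrix_matrix_mult_nth: "(A ** B) $ i $ j = (\<Sum>k\<in>UNIV. A $ i $ k * B $ k $ j)"
  by (simp add: matrix_matrix_mult_def)

lemma norm_le_sum_norm_cart: "norm x \<le> (\<Sum>i\<in>UNIV. norm (x $ i))"
  by (simp add: norm_vec_def L2_set_le_sum)

lemma norm_nth_nth_le: "norm (M $ i $ j) \<le> norm M"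
  using Finite_Cartesian_Product.norm_nth_le[of "M $ i" j]
    Finite_Cartesian_Product.norm_nth_le[of M i]
  by linarith

lemma norm_matrix_mult_le:
  fixes A :: "'a::real_normed_field^'n^'m" and B :: "'a^'p^'n"
  shows "norm (A ** B) \<le> norm A * norm B * (CARD('m) * CARD('p) * CARD('n))"
proof -
  have entry: "norm ((A ** B) $ i $ j) \<le> norm A * norm B * CARD('n)" for i j
  proof -
    have "norm ((A ** B) $ i $ j) \<le> (\<Sum>k\<in>UNIV. norm (A $ i $ k) * norm (B $ k $ j))"
      by (simp add: matrix_matrix_mult_nth norm_mult[symmetric] norm_sum)
    also have "\<dots> \<le> (\<Sum>k\<in>(UNIV::'n set). norm A * norm B)"
      by (intro sum_mono mult_mono norm_nth_nth_le) auto
    finally show ?thesis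
      by (simp add: mult_ac)
  qed
  have "norm (A ** B) \<le> (\<Sum>i\<in>UNIV. \<Sum>j\<in>UNIV. norm ((A ** B) $ i $ j))"
    by (intro order_trans[OF norm_le_sum_norm_cart] sum_mono norm_le_sum_norm_cart)
  also have "\<dots> \<le> (\<Sum>i\<in>(UNIV::'m set). \<Sum>j\<in>(UNIV::'p set). norm A * norm B * CARD('n))"
    by (intro sum_mono entry)
  finally show ?thesis
    by (simp add: mult_ac)
qed

lemma bounded_bilinear_matrix_matrix_mult:
  "bounded_bilinear ((**) :: 'a::real_normed_field^'n^'m \<Rightarrow> 'a^'p^'n \<Rightarrow> 'a^'p^'m)"
proof
  fix A A' :: "'a^'n^'m" and B B' :: "'a^'p^'n" and r :: real
  show "(A + A') ** B = A ** B + A' ** B"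
    by (vector matrix_matrix_mult_def sum.distrib distrib_right)
  show "A ** (B + B') = A ** B + A ** B'"
    by (rule matrix_add_ldistrib)
  show "r *\<^sub>R A ** B = r *\<^sub>R (A ** B)"
    by (simp add: scalar_matrix_assoc)
  show "A ** r *\<^sub>R B = r *\<^sub>R (A ** B)"
    by (simp add: matrix_scalar_ac scalar_matrix_assoc)
  show "\<exists>K. \<forall>A B. norm ((A::'a^'n^'m) ** (B::'a^'p^'n)) \<le> norm A * norm B * K"
    using norm_matrix_mult_le by blast
qed

lemmas matrix_mult_sum_left = bounded_bilinear.sum_left[OF bounded_bilinear_matrix_matrix_mult]
  and matrix_mult_sum_right = bounded_bilinear.sum_right[OF bounded_bilinear_matrix_matrix_mult]
  and matrix_mult_scaleR_left = bounded_bilinear.scaleR_left[OF bounded_bilinear_matrix_matrix_mult]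
  and matrix_mult_scaleR_right =
    bounded_bilinear.scaleR_right[OF bounded_bilinear_matrix_matrix_mult]

section \<open>Real square matrices as a Banach algebra\<close>

text \<open>
  On real^'n^'n the product is componentwise, so matrix multiplication lives on a copy of the
  type. With the operator norm this copy is a Banach algebra, and mexp is its exponential
  (see mexp_eq_exp), which gives access to the library facts about exp.
\<close>

typedef ('n::finite) sqmat = "UNIV :: (real^'n^'n) set"
  by simp

setup_lifting type_definition_sqmat

instantiation sqmat :: (finite) real_normed_vector
begin

lift_definition zero_sqmat :: "'a sqmat" is 0 .
lift_definition plus_sqmat :: "'a sqmat \<Rightarrow> 'a sqmat \<Rightarrow> 'a sqmat" is "(+)" .
lift_definition minus_sqmat :: "'a sqmat \<Rightarrow> 'a sqmat \<Rightarrow> 'a sqmat" is "(-)" .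
lift_definition uminus_sqmat :: "'a sqmat \<Rightarrow> 'a sqmat" is uminus .
lift_definition scaleR_sqmat :: "real \<Rightarrow> 'a sqmat \<Rightarrow> 'a sqmat" is scaleR .
lift_definition norm_sqmat :: "'a sqmat \<Rightarrow> real" is "\<lambda>A. onorm (\<lambda>x. A *v x)" .

definition dist_sqmat :: "'a sqmat \<Rightarrow> 'a sqmat \<Rightarrow> real"
  where "dist_sqmat A B = norm (A - B)"

definition uniformity_sqmat :: "('a sqmat \<times> 'a sqmat) filter"
  where "uniformity_sqmat = (INF e\<in>{0<..}. principal {(x, y). dist x y < e})"

definition open_sqmat :: "'a sqmat set \<Rightarrow> bool"
  where "open_sqmat S = (\<forall>x\<in>S. \<forall>\<^sub>F (x', y) in uniformity. x' = x \<longrightarrow> y \<in> S)"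

definition sgn_sqmat :: "'a sqmat \<Rightarrow> 'a sqmat"
  where "sgn_sqmat A = inverse (norm A) *\<^sub>R A"

instance
proof
  fix A B C :: "'a sqmat" and r s :: real
  show "A + B + C = A + (B + C)" by transfer (simp add: algebra_simps)
  show "A + B = B + A" by transfer (simp add: algebra_simps)
  show "0 + A = A" by transfer simp
  show "- A + A = 0" by transfer simp
  show "A - B = A + - B" by transfer simp
  show "r *\<^sub>R (A + B) = r *\<^sub>R A + r *\<^sub>R B" by transfer (simp add: algebra_simps)
  show "(r + s) *\<^sub>R A = r *\<^sub>R A + s *\<^sub>R A" by transfer (simp add: algebra_simps)
  show "r *\<^sub>R s *\<^sub>R A = (r * s) *\<^sub>R A" by transfer simp
  show "1 *\<^sub>R A = A" by transfer simp
  show "norm A = 0 \<longleftrightarrow> A = 0"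
    by transfer (simp add: onorm_eq_0 matrix_vector_mul_bounded_linear matrix_eq[where B = 0])
  show "norm (A + B) \<le> norm A + norm B"
    by transfer
      (use onorm_triangle[OF matrix_vector_mul_bounded_linear matrix_vector_mul_bounded_linear]
        in \<open>simp add: matrix_vector_mult_add_rdistrib[symmetric]\<close>)
  show "norm (r *\<^sub>R A) = \<bar>r\<bar> * norm A"
  proof transfer
    fix r and A :: "real^'a^'a"
    show "onorm (\<lambda>x. (r *\<^sub>R A) *v x) = \<bar>r\<bar> * onorm (\<lambda>x. A *v x)"
      using onorm_scaleR[OF matrix_vector_mul_bounded_linear[of A], of r]
      by (simp add: scaleR_matrix_vector_assoc)
  qed
qed (simp_all only: dist_sqmat_def sgn_sqmat_def uniformity_sqmat_def open_sqmat_def)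

end

instantiation sqmat :: (finite) real_normed_algebra_1
begin

lift_definition one_sqmat :: "'a sqmat" is "mat 1" .
lift_definition times_sqmat :: "'a sqmat \<Rightarrow> 'a sqmat \<Rightarrow> 'a sqmat" is "(**)" .

instance
proof
  fix A B C :: "'a sqmat" and r :: real
  show "A * B * C = A * (B * C)" by transfer (simp add: matrix_mul_assoc)
  show "1 * A = A" "A * 1 = A" by (transfer; simp)+
  show "(A + B) * C = A * C + B * C"
    by transfer (vector matrix_matrix_mult_def sum.distrib distrib_right)
  show "A * (B + C) = A * B + A * C" by transfer (simp add: matrix_add_ldistrib)
  show "(0::'a sqmat) \<noteq> 1" by transfer (simp add: vec_eq_iff mat_def)
  show "r *\<^sub>R A * B = r *\<^sub>R (A * B)" by transfer (simp add: scalar_matrix_assoc)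
  show "A * r *\<^sub>R B = r *\<^sub>R (A * B)" by transfer (simp add: matrix_scalar_ac scalar_matrix_assoc)
  show "norm (1::'a sqmat) = 1" by transfer (simp add: onorm_id)
  show "norm (A * B) \<le> norm A * norm B"
    by transfer
      (use onorm_compose[OF matrix_vector_mul_bounded_linear matrix_vector_mul_bounded_linear]
        in \<open>simp add: o_def matrix_vector_mul_assoc\<close>)
qed

end

lemma norm_Rep_sqmat_le:
  "norm (Rep_sqmat A) \<le> norm (A :: 'n::finite sqmat) * (CARD('n) * CARD('n))"
proof -
  have "norm (Rep_sqmat A) \<le> (\<Sum>i\<in>UNIV. \<Sum>j\<in>UNIV. \<bar>Rep_sqmat A $ i $ j\<bar>)"
    by (intro order_trans[OF norm_le_sum_norm_cart] sum_mono norm_le_l1_cart)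
  also have "\<dots> \<le> (\<Sum>i\<in>(UNIV::'n set). \<Sum>j\<in>(UNIV::'n set). norm A)"
    by (intro sum_mono) (simp add: norm_sqmat.rep_eq matrix_component_le_onorm)
  finally show ?thesis
    by (simp add: mult_ac)
qed

lemma bounded_linear_Rep_sqmat: "bounded_linear (Rep_sqmat :: 'n::finite sqmat \<Rightarrow> _)"
  by (rule bounded_linear_intro[OF _ _ norm_Rep_sqmat_le])
    (simp_all add: plus_sqmat.rep_eq scaleR_sqmat.rep_eq)

lemma bounded_linear_Abs_sqmat: "bounded_linear (Abs_sqmat :: _ \<Rightarrow> 'n::finite sqmat)"
  by (rule linear_conv_bounded_linear[THEN iffD1], rule linearI)
    (simp_all add: plus_sqmat.abs_eq scaleR_sqmat.abs_eq)

instance sqmat :: (finite) banach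
proof
  fix X :: "nat \<Rightarrow> 'a sqmat"
  assume "Cauchy X"
  then have "convergent (\<lambda>n. Rep_sqmat (X n))"
    by (simp add: bounded_linear.Cauchy[OF bounded_linear_Rep_sqmat] Cauchy_convergent)
  then have "convergent (\<lambda>n. Abs_sqmat (Rep_sqmat (X n)))"
    by (auto simp: convergent_def intro: bounded_linear.tendsto[OF bounded_linear_Abs_sqmat])
  then show "convergent X"
    by (simp add: Rep_sqmat_inverse)
qed

section \<open>The matrix exponential\<close>

lemma Rep_sqmat_power: "Rep_sqmat (A ^ n) = matpow (Rep_sqmat A) n"
  by (induction n) (simp_all add: one_sqmat.rep_eq times_sqmat.rep_eq)

lemma mexp_eq_exp: "mexp X = Rep_sqmat (exp (Abs_sqmat X))"
proof -
  have "(\<lambda>n. Rep_sqmat (Abs_sqmat X ^ n /\<^sub>R fact n)) sums Rep_sqmat (exp (Abs_sqmat X))"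
    by (rule bounded_linear.sums[OF bounded_linear_Rep_sqmat exp_converges])
  then show ?thesis
    unfolding mexp_def
    by (simp add: sums_iff scaleR_sqmat.rep_eq Rep_sqmat_power Abs_sqmat_inverse divide_inverse)
qed

lemma mexp_zero [simp]: "mexp 0 = mat 1"
  by (simp add: mexp_eq_exp zero_sqmat.abs_eq[symmetric] one_sqmat.rep_eq)

lemma mexp_add_commuting: "A ** B = B ** A \<Longrightarrow> mexp (A + B) = mexp A ** mexp B"
  using exp_add_commuting[of "Abs_sqmat A" "Abs_sqmat B"]
  by (simp add: mexp_eq_exp times_sqmat.abs_eq plus_sqmat.abs_eq times_sqmat.rep_eq)

lemma mexp_scaleR_add: "mexp ((s + t) *\<^sub>R X) = mexp (s *\<^sub>R X) ** mexp (t *\<^sub>R X)"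
  by (simp add: scaleR_add_left mexp_add_commuting matrix_scalar_ac scalar_matrix_assoc[symmetric])

lemma mexp_minus_right: "mexp X ** mexp (- X) = mat 1"
  and mexp_minus_left: "mexp (- X) ** mexp X = mat 1"
  using mexp_scaleR_add[of 1 "-1" X] mexp_scaleR_add[of "-1" 1 X] by simp_all

lemma matrix_inv_mexp: "matrix_inv (mexp X) = mexp (- X)"
  by (rule matrix_inv_unique[OF mexp_minus_right mexp_minus_left])

lemma invertible_mexp: "invertible (mexp X)"
  using mexp_minus_right mexp_minus_left by (auto simp: invertible_def)

lemma mexp_of_nat_scaleR: "mexp (of_nat n *\<^sub>R X) = matpow (mexp X) n"
  by (induction n) (simp_all add: mexp_scaleR_add[of 1, simplified] add.commute)

lemma isCont_mexp: "isCont mexp X"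
  unfolding mexp_eq_exp[abs_def]
  by (intro isCont_o2[OF _ linear_continuous_at[OF bounded_linear_Rep_sqmat]]
      isCont_o2[OF _ isCont_exp_algebra] linear_continuous_at[OF bounded_linear_Abs_sqmat])

lemma has_derivative_mexp_linear_0:
  assumes "bounded_linear l"
  shows "((\<lambda>x. mexp (l x)) has_derivative l) (at 0)"
proof -
  have "l 0 = 0"
    by (rule linear_0[OF bounded_linear.linear[OF assms]])
  then have "(exp has_derivative (\<lambda>h. h)) (at (Abs_sqmat (l 0)))"
    by (simp add: zero_sqmat.abs_eq[symmetric] has_derivative_exp_0)
  then have "((\<lambda>x. Rep_sqmat (exp (Abs_sqmat (l x)))) has_derivative
      (\<lambda>h. Rep_sqmat (Abs_sqmat (l h)))) (at 0)"
    by (intro bounded_linear.has_derivative[OF bounded_linear_Rep_sqmat]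
        has_derivative_compose[of "\<lambda>x. Abs_sqmat (l x)", where g = exp]
        bounded_linear.has_derivative[OF bounded_linear_Abs_sqmat]
        bounded_linear_imp_has_derivative[OF assms])
  then show ?thesis
    by (simp add: mexp_eq_exp Abs_sqmat_inverse)
qed

lemma has_vector_derivative_mexp_0: "((\<lambda>t. mexp (t *\<^sub>R X)) has_vector_derivative X) (at 0)"
  unfolding has_vector_derivative_def
  by (rule has_derivative_mexp_linear_0) (rule bounded_linear_scaleR_left)

section \<open>The action of G on coefficient families\<close>

lemma representation_mat_1:
  assumes "representation G \<tau>" and "mat 1 \<in> G"
  shows "\<tau> (mat 1) = mat 1"
proof -
  have inv: "invertible (\<tau> (mat 1))" and idem: "\<tau> (mat 1) ** \<tau> (mat 1) = \<tau> (mat 1)"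
    using assms unfolding representation_def GL_def by (metis mem_Collect_eq matrix_mul_lid)+
  have "\<tau> (mat 1) = matrix_inv (\<tau> (mat 1)) ** \<tau> (mat 1) ** \<tau> (mat 1)"
    using inv by (simp add: matrix_inv_left)
  also have "\<dots> = matrix_inv (\<tau> (mat 1)) ** (\<tau> (mat 1) ** \<tau> (mat 1))"
    by (simp only: matrix_mul_assoc)
  also have "\<dots> = mat 1"
    using inv by (simp only: idem matrix_inv_left)
  finally show ?thesis .
qed

lemma representation_matrix_inv:
  assumes G: "matrix_lie_group G" and rep: "representation G \<tau>" and g: "g \<in> G"
  shows "\<tau> g ** \<tau> (matrix_inv g) = mat 1" "\<tau> (matrix_inv g) ** \<tau> g = mat 1"
proof -
  have "invertible g" "matrix_inv g \<in> G" "mat 1 \<in> G"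
    using G g unfolding matrix_lie_group_def GL_def by auto
  with rep g show "\<tau> g ** \<tau> (matrix_inv g) = mat 1" "\<tau> (matrix_inv g) ** \<tau> g = mat 1"
    unfolding representation_def
    by (metis matrix_inv_right matrix_inv_left representation_mat_1[OF rep])+
qed

definition conj_action ::
    "(real^'n^'n \<Rightarrow> 'k::real_normed_field^'m^'m) \<Rightarrow> real^'n^'n
       \<Rightarrow> ('n \<Rightarrow> 'k^'m^'m) \<Rightarrow> 'n \<Rightarrow> 'k^'m^'m" where
  "conj_action \<tau> g B j = (\<Sum>k\<in>UNIV. (g $ j $ k) *\<^sub>R (\<tau> g ** B k ** \<tau> (matrix_inv g)))"

lemma covariant_iff_conj_action: "covariant G \<tau> B \<longleftrightarrow> (\<forall>g\<in>G. conj_action \<tau> g B = B)"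
  by (simp add: covariant_def conj_action_def fun_eq_iff)

lemma conj_action_mat_1:
  assumes "\<tau> (mat 1) = mat 1"
  shows "conj_action \<tau> (mat 1) B = B"
  using assms
  by (simp add: fun_eq_iff conj_action_def mat_1_nth matrix_inv_mat_1
      if_distrib[of "\<lambda>c. c *\<^sub>R _"] cong: if_cong)

lemma conj_action_matrix_mult:
  assumes G: "matrix_lie_group G" and rep: "representation G \<tau>" and "g \<in> G" "h \<in> G"
  shows "conj_action \<tau> (g ** h) B = conj_action \<tau> g (conj_action \<tau> h B)"
proof
  fix j
  have "invertible g" "invertible h" "matrix_inv g \<in> G" "matrix_inv h \<in> G"
    using G \<open>g \<in> G\<close> \<open>h \<in> G\<close> unfolding matrix_lie_group_def GL_def by auto
  then have "\<tau> (matrix_inv (g ** h)) = \<tau> (matrix_inv h) ** \<tau> (matrix_inv g)"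
    and "\<tau> (g ** h) = \<tau> g ** \<tau> h"
    using rep \<open>g \<in> G\<close> \<open>h \<in> G\<close> by (simp_all add: matrix_inv_matrix_mul representation_def)
  then have "conj_action \<tau> (g ** h) B j
      = (\<Sum>k\<in>UNIV. \<Sum>i\<in>UNIV. (g $ j $ i * h $ i $ k) *\<^sub>R
          (\<tau> g ** \<tau> h ** B k ** \<tau> (matrix_inv h) ** \<tau> (matrix_inv g)))"
    by (simp add: conj_action_def matrix_matrix_mult_nth scaleR_sum_left matrix_mul_assoc)
  also have "\<dots> = (\<Sum>i\<in>UNIV. \<Sum>k\<in>UNIV. (g $ j $ i * h $ i $ k) *\<^sub>R
          (\<tau> g ** \<tau> h ** B k ** \<tau> (matrix_inv h) ** \<tau> (matrix_inv g)))"
    by (rule sum.swap)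
  also have "\<dots> = conj_action \<tau> g (conj_action \<tau> h B) j"
    by (simp add: conj_action_def matrix_mult_sum_left matrix_mult_sum_right matrix_mult_scaleR_left
        matrix_mult_scaleR_right scaleR_sum_right matrix_mul_assoc)
  finally show "conj_action \<tau> (g ** h) B j = conj_action \<tau> g (conj_action \<tau> h B) j" .
qed

lemma conj_action_fixes_iff:
  assumes G: "matrix_lie_group G" and rep: "representation G \<tau>" and g: "g \<in> G"
  shows "conj_action \<tau> g B j = B j \<longleftrightarrow> (\<Sum>k\<in>UNIV. (g $ j $ k) *\<^sub>R (\<tau> g ** B k)) = B j ** \<tau> g"
    (is "?lhs = B j \<longleftrightarrow> ?S = B j ** \<tau> g")
proof
  assume "?lhs = B j"
  moreover have "?lhs ** \<tau> g = ?S"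
    by (simp add: conj_action_def matrix_mult_sum_left matrix_mult_scaleR_left
        matrix_mul_assoc[symmetric] representation_matrix_inv[OF G rep g])
  ultimately show "?S = B j ** \<tau> g"
    by simp
next
  assume "?S = B j ** \<tau> g"
  moreover have "?S ** \<tau> (matrix_inv g) = ?lhs"
    by (simp add: conj_action_def matrix_mult_sum_left matrix_mult_scaleR_left)
  ultimately show "?lhs = B j"
    by (simp add: matrix_mul_assoc[symmetric] representation_matrix_inv[OF G rep g])
qed

lemma has_vector_derivative_conj_action:
  assumes "\<And>i. (F i has_vector_derivative F' i) (at s)"
  shows "((\<lambda>s. conj_action \<tau> g (\<lambda>i. F i s) j) has_vector_derivative conj_action \<tau> g F' j) (at s)"
proof -
  have "bounded_linear (\<lambda>M. c *\<^sub>R (S ** M ** R))"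
    for c :: real and S R :: "'k::real_normed_field^'m^'m"
  proof -
    have "bounded_linear (\<lambda>M. S ** M)" "bounded_linear (\<lambda>M. M ** R)"
      by (rule bounded_bilinear.bounded_linear_right bounded_bilinear.bounded_linear_left,
          rule bounded_bilinear_matrix_matrix_mult)+
    then show ?thesis
      using bounded_linear_compose[OF bounded_linear_scaleR_right] bounded_linear_compose by blast
  qed
  then show ?thesis
    unfolding conj_action_def
    by (intro has_vector_derivative_sum bounded_linear.has_vector_derivative[OF _ assms])
qed

section \<open>Neighbourhoods of the identity in a matrix Lie group\<close>

lemma mexp_of_int_scaleR_mem:
  assumes G: "matrix_lie_group G" and Y: "mexp Y \<in> G"
  shows "mexp (of_int k *\<^sub>R Y) \<in> G"
proof -
  have "matrix_inv (mexp Y) \<in> G"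
    using G Y unfolding matrix_lie_group_def by blast
  then have Y': "mexp (- Y) \<in> G"
    by (simp add: matrix_inv_mexp)
  have pow: "matpow M n \<in> G" if "M \<in> G" for M n
    using G that unfolding matrix_lie_group_def by (induction n) auto
  show ?thesis
  proof (cases "k \<ge> 0")
    case True
    then have "of_int k *\<^sub>R Y = of_nat (nat k) *\<^sub>R Y"
      by simp
    then show ?thesis
      using pow[OF Y] by (simp only: mexp_of_nat_scaleR)
  next
    case False
    then have "of_int k *\<^sub>R Y = of_nat (nat (- k)) *\<^sub>R (- Y)"
      by simp
    then show ?thesis
      using pow[OF Y'] by (simp only: mexp_of_nat_scaleR)
  qed
qed

lemma lie_algebra_limit_direction:
  assumes G: "matrix_lie_group G"
    and Y: "\<And>n. mexp (Y n) \<in> G" "\<And>n. Y n \<noteq> 0" "Y \<longlonglongrightarrow> 0"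
    and w: "(\<lambda>n. Y n /\<^sub>R norm (Y n)) \<longlonglongrightarrow> w"
  shows "w \<in> lie_algebra G"
  unfolding lie_algebra_def
proof (intro CollectI allI)
  fix t :: real
  \<comment> \<open>integer multiples of the \<open>Y n\<close> approximate \<open>t w\<close>; their exponentials stay in \<open>G\<close>\<close>
  define k where "k n = \<lfloor>t / norm (Y n)\<rfloor>" for n
  define Z where "Z n = of_int (k n) *\<^sub>R Y n" for n
  have bound: "norm (Z n - t *\<^sub>R w) \<le> norm (Y n) + \<bar>t\<bar> * norm (Y n /\<^sub>R norm (Y n) - w)"
    for n
  proof -
    have pos: "norm (Y n) > 0"
      using Y(2) by simp
    define u where "u = Y n /\<^sub>R norm (Y n)"
    have "norm u = 1"
      using pos by (simp add: u_def)
    have "norm (Z n - t *\<^sub>R w) = norm ((of_int (k n) * norm (Y n) - t) *\<^sub>R u + t *\<^sub>R (u - w))"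
      using pos by (simp add: Z_def u_def algebra_simps)
    also have "\<dots> \<le> \<bar>of_int (k n) * norm (Y n) - t\<bar> + \<bar>t\<bar> * norm (u - w)"
      by (rule order_trans[OF norm_triangle_ineq]) (simp add: \<open>norm u = 1\<close>)
    also have "\<bar>of_int (k n) * norm (Y n) - t\<bar> \<le> norm (Y n)"
      using floor_divide_lower[OF pos, of t] floor_divide_upper[OF pos, of t]
      by (simp add: k_def abs_le_iff ring_distribs)
    finally show ?thesis
      by (simp add: u_def)
  qed
  have lim: "(\<lambda>n. norm (Y n) + \<bar>t\<bar> * norm (Y n /\<^sub>R norm (Y n) - w)) \<longlonglongrightarrow> 0"
    using tendsto_add[OF tendsto_norm_zero[OF Y(3)]
        tendsto_mult_right_zero[OF tendsto_norm_zero[OF LIM_zero[OF w]]]] by simp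
  have "(\<lambda>n. Z n - t *\<^sub>R w) \<longlonglongrightarrow> 0"
    by (rule Lim_null_comparison[OF always_eventually lim]) (simp add: bound)
  then have lim_exp: "(\<lambda>n. mexp (Z n)) \<longlonglongrightarrow> mexp (t *\<^sub>R w)"
    by (intro isCont_tendsto_compose[OF isCont_mexp]) (simp add: LIM_zero_iff)
  obtain C where C: "closed C" "G = GL \<inter> C"
    using G unfolding matrix_lie_group_def closedin_closed by blast
  have "mexp (Z n) \<in> C" for n
    using mexp_of_int_scaleR_mem[OF G Y(1)] C(2) by (simp add: Z_def)
  then have "mexp (t *\<^sub>R w) \<in> C"
    using closed_sequentially[OF C(1) _ lim_exp] by blast
  with C(2) show "mexp (t *\<^sub>R w) \<in> G"
    by (simp add: GL_def invertible_mexp)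
qed

lemma mexp_mem_small_kernel_imp_zero:
  assumes G: "matrix_lie_group G" and P: "bounded_linear P"
    and P_id: "\<And>X. X \<in> lie_algebra G \<Longrightarrow> P X = X"
  shows "\<exists>e>0. \<forall>Y. norm Y < e \<longrightarrow> P Y = 0 \<longrightarrow> mexp Y \<in> G \<longrightarrow> Y = 0"
proof (rule ccontr)
  assume "\<not> ?thesis"
  then have "\<exists>Y. norm Y < inverse (Suc n) \<and> P Y = 0 \<and> mexp Y \<in> G \<and> Y \<noteq> 0" for n
    by (metis of_nat_0_less_iff positive_imp_inverse_positive zero_less_Suc)
  then obtain Y where Y: "\<And>n. norm (Y n) < inverse (Suc n)" "\<And>n. P (Y n) = 0"
    "\<And>n. mexp (Y n) \<in> G" "\<And>n. Y n \<noteq> 0"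
    by metis
  have "Y \<longlonglongrightarrow> 0"
    using Y(1)
    by (intro Lim_null_comparison[OF _ LIMSEQ_inverse_real_of_nat]) (simp add: less_imp_le)
  define U where "U n = Y n /\<^sub>R norm (Y n)" for n
  have "U n \<in> sphere 0 1" for n
    using Y(4) by (simp add: U_def)
  then obtain w \<phi> where w: "w \<in> sphere 0 1" and \<phi>: "strict_mono \<phi>"
    and Uw: "(U \<circ> \<phi>) \<longlonglongrightarrow> w"
    using compact_imp_seq_compact[OF compact_sphere] unfolding seq_compact_def by metis
  have "w \<in> lie_algebra G"
    using Y Uw LIMSEQ_subseq_LIMSEQ[OF \<open>Y \<longlonglongrightarrow> 0\<close> \<phi>]
    by (intro lie_algebra_limit_direction[OF G, of "Y \<circ> \<phi>"]) (simp_all add: U_def o_def)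
  moreover have "(\<lambda>n. P ((U \<circ> \<phi>) n)) \<longlonglongrightarrow> P w"
    by (rule bounded_linear.tendsto[OF P Uw])
  then have "P w = 0"
    using Y(2)
    by (simp add: U_def o_def linear_cmul[OF bounded_linear.linear[OF P]] LIMSEQ_const_iff)
  ultimately show False
    using w P_id by simp
qed

lemma linear_projection_onto_span:
  fixes S :: "'a::euclidean_space set"
  obtains B c where "B \<subseteq> S" "finite B" "\<And>v. bounded_linear (c v)"
    "\<And>u. u \<in> span S \<Longrightarrow> (\<Sum>v\<in>B. c v u *\<^sub>R v) = u"
proof -
  obtain B where "B \<subseteq> S" and indep: "independent B" and "S \<subseteq> span B"
    by (rule maximal_independent_subset)
  then have "span S \<subseteq> span B"
    by (metis span_mono span_span)
  have "finite B"
    using independent_bound[OF indep] by simp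
  define c where "c v = construct B (\<lambda>w. if w = v then 1 else 0 :: real)" for v
  have lin: "bounded_linear (c v)" for v
    unfolding c_def using linear_construct[OF indep] linear_conv_bounded_linear by blast
  have "(\<Sum>v\<in>B. c v w *\<^sub>R v) = w" if "w \<in> B" for w
    using that \<open>finite B\<close>
    by (simp add: c_def construct_basis[OF indep] if_distrib[of "\<lambda>x. x *\<^sub>R _"] cong: if_cong)
  moreover have "linear (\<lambda>u. \<Sum>v\<in>B. c v u *\<^sub>R v)"
    using lin by (intro linear_compose_sum)
      (auto intro: bounded_linear.linear bounded_linear_compose[OF bounded_linear_scaleR_left])
  ultimately have "(\<Sum>v\<in>B. c v u *\<^sub>R v) = u" if "u \<in> span S" for u
    using linear_eq_on[OF _ linear_id, of "\<lambda>u. \<Sum>v\<in>B. c v u *\<^sub>R v" u B]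
      that \<open>span S \<subseteq> span B\<close>
    by auto
  with that \<open>B \<subseteq> S\<close> \<open>finite B\<close> lin show thesis
    by blast
qed

definition mexp_prod :: "('a \<Rightarrow> real^'n^'n) list \<Rightarrow> 'a \<Rightarrow> real^'n^'n" where
  "mexp_prod ls x = foldr (\<lambda>l M. mexp (l x) ** M) ls (mat 1)"

lemma mexp_prod_Nil [simp]: "mexp_prod [] x = mat 1"
  and mexp_prod_Cons [simp]: "mexp_prod (l # ls) x = mexp (l x) ** mexp_prod ls x"
  by (simp_all add: mexp_prod_def)

lemma mexp_prod_eq_mat_1: "\<forall>l\<in>set ls. l x = 0 \<Longrightarrow> mexp_prod ls x = mat 1"
  by (induction ls) simp_all

lemma mexp_prod_mem:
  assumes "\<And>l. l \<in> set ls \<Longrightarrow> mexp (l x) \<in> H" and "mat 1 \<in> H"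
    and "\<And>a b. a \<in> H \<Longrightarrow> b \<in> H \<Longrightarrow> a ** b \<in> H"
  shows "mexp_prod ls x \<in> H"
  using assms(1) by (induction ls) (simp_all add: assms(2,3))

lemma continuous_on_mexp_prod:
  assumes "\<And>l. l \<in> set ls \<Longrightarrow> bounded_linear l"
  shows "continuous_on UNIV (mexp_prod ls)"
  using assms
proof (induction ls)
  case Nil
  then show ?case
    by simp
next
  case (Cons l ls)
  have "isCont (\<lambda>x. mexp (l x)) x" for x
    using Cons.prems by (intro isCont_o2[OF linear_continuous_at isCont_mexp]) simp
  then have "continuous_on UNIV (\<lambda>x. mexp (l x))"
    by (simp add: continuous_at_imp_continuous_on)
  moreover have "mexp_prod (l # ls) = (\<lambda>x. mexp (l x) ** mexp_prod ls x)"
    by (simp add: fun_eq_iff)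
  ultimately show ?case
    using Cons by (simp add: bounded_bilinear.continuous_on[OF bounded_bilinear_matrix_matrix_mult])
qed

lemma has_derivative_mexp_prod_0:
  assumes "\<And>l. l \<in> set ls \<Longrightarrow> bounded_linear l"
  shows "(mexp_prod ls has_derivative (\<lambda>h. \<Sum>l\<leftarrow>ls. l h)) (at 0)"
  using assms
proof (induction ls)
  case Nil
  then show ?case
    by simp
next
  case (Cons l ls)
  have "l 0 = 0" "\<forall>l'\<in>set ls. l' 0 = 0"
    using Cons.prems by (auto intro: linear_0 bounded_linear.linear)
  then have "mexp (l 0) = mat 1" "mexp_prod ls 0 = mat 1"
    by (simp_all add: mexp_prod_eq_mat_1)
  with Cons show ?case
    using bounded_bilinear.FDERIV[OF bounded_bilinear_matrix_matrix_mult
        has_derivative_mexp_linear_0[of l] Cons.IH]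
    by (simp add: add.commute)
qed

lemma mexp_chart_image_contains_ball:
  fixes P :: "real^'n^'n \<Rightarrow> real^'n^'n"
  assumes P: "bounded_linear P" and ls: "\<And>l. l \<in> set ls \<Longrightarrow> bounded_linear l"
    and sum_ls: "\<And>h. (\<Sum>l\<leftarrow>ls. l h) = P h" and "r > 0"
  obtains \<epsilon> where "\<epsilon> > 0"
    "ball (mat 1) \<epsilon> \<subseteq> (\<lambda>A. mexp_prod ls A ** mexp (A - P A)) ` ball 0 r"
proof -
  define f where "f = (\<lambda>A. mexp_prod ls A ** mexp (A - P A))"
  have compl: "bounded_linear (\<lambda>A. A - P A)"
    by (intro bounded_linear_sub bounded_linear_ident P)
  have zero: "mexp_prod ls 0 = mat 1" "P 0 = 0"
    using ls P by (simp_all add: mexp_prod_eq_mat_1 linear_0 bounded_linear.linear)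
  have "continuous_on UNIV f"
    unfolding f_def
    by (intro bounded_bilinear.continuous_on[OF bounded_bilinear_matrix_matrix_mult]
        continuous_on_mexp_prod ls continuous_at_imp_continuous_on ballI
        isCont_o2[OF linear_continuous_at[OF compl] isCont_mexp])
  moreover have "(f has_derivative (\<lambda>h. h)) (at 0)"
    using bounded_bilinear.FDERIV[OF bounded_bilinear_matrix_matrix_mult
        has_derivative_mexp_prod_0[of ls, OF ls] has_derivative_mexp_linear_0[OF compl]]
    by (simp add: f_def zero sum_ls)
  ultimately have "f 0 \<in> interior (f ` ball 0 r)"
    using \<open>r > 0\<close> by (intro sussmann_open_mapping[OF open_UNIV, where g' = "\<lambda>h. h"]) auto
  moreover have "f 0 = mat 1"
    by (simp add: f_def zero)
  ultimately obtain \<epsilon> where "\<epsilon> > 0" "ball (mat 1) \<epsilon> \<subseteq> f ` ball 0 r"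
    unfolding mem_interior by metis
  then show thesis
    unfolding f_def by (rule that)
qed

lemma submonoid_contains_neighbourhood_of_mat_1:
  fixes G :: "(real^'n^'n) set"
  assumes G: "matrix_lie_group G"
    and H: "H \<subseteq> G" "mat 1 \<in> H" "\<And>a b. a \<in> H \<Longrightarrow> b \<in> H \<Longrightarrow> a ** b \<in> H"
    and S: "\<And>v t. v \<in> S \<Longrightarrow> mexp (t *\<^sub>R v) \<in> H" and lie: "lie_algebra G \<subseteq> span S"
  obtains \<epsilon> where "\<epsilon> > 0" "\<And>g. g \<in> G \<Longrightarrow> dist g (mat 1) < \<epsilon> \<Longrightarrow> g \<in> H"
proof -
  obtain B c where B: "B \<subseteq> S" "finite B" and c: "\<And>v. bounded_linear (c v)"
    and proj: "\<And>u. u \<in> span S \<Longrightarrow> (\<Sum>v\<in>B. c v u *\<^sub>R v) = u"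
    using linear_projection_onto_span[of S] by blast
  define P where "P A = (\<Sum>v\<in>B. c v A *\<^sub>R v)" for A :: "real^'n^'n"
  have P: "bounded_linear P"
    unfolding P_def using c
    by (intro bounded_linear_sum bounded_linear_compose[OF bounded_linear_scaleR_left])
  have "P A \<in> span S" for A
    unfolding P_def using B(1) by (intro span_sum span_scale span_base) auto
  then have P_compl: "P (A - P A) = 0" for A
    using proj by (simp add: P_def[symmetric] linear_diff[OF bounded_linear.linear[OF P]])
  obtain e where e: "e > 0" "\<And>Y. norm Y < e \<Longrightarrow> P Y = 0 \<Longrightarrow> mexp Y \<in> G \<Longrightarrow> Y = 0"
    using mexp_mem_small_kernel_imp_zero[OF G P] proj lie by (auto simp: P_def)
  obtain K where K: "K > 0" "\<And>A. norm (A - P A) \<le> norm A * K"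
    using bounded_linear.pos_bounded[OF bounded_linear_sub[OF bounded_linear_ident P]] by blast
  obtain xs where xs: "set xs = B" "distinct xs"
    using finite_distinct_list[OF B(2)] by blast
  define ls where "ls = map (\<lambda>v A. c v A *\<^sub>R v) xs"
  have ls: "\<And>l. l \<in> set ls \<Longrightarrow> bounded_linear l"
    using c by (auto simp: ls_def intro: bounded_linear_compose[OF bounded_linear_scaleR_left])
  have sum_ls: "(\<Sum>l\<leftarrow>ls. l h) = P h" for h
    by (simp add: ls_def P_def o_def sum_list_distinct_conv_sum_set xs flip: xs(1))
  have "e / K > 0"
    using e(1) K(1) by simp
  then obtain \<epsilon> where "\<epsilon> > 0"
    and \<epsilon>: "ball (mat 1) \<epsilon> \<subseteq> (\<lambda>A. mexp_prod ls A ** mexp (A - P A)) ` ball 0 (e / K)"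
    using mexp_chart_image_contains_ball[OF P ls sum_ls] by blast
  \<comment> \<open>near \<open>mat 1\<close>, \<open>g\<close> is an element of \<open>H\<close> times \<open>mexp Y\<close> with \<open>Y\<close> small in the kernel of \<open>P\<close>\<close>
  have "g \<in> H" if g: "g \<in> G" and near: "dist g (mat 1) < \<epsilon>" for g
  proof -
    obtain A where A: "norm A < e / K" "g = mexp_prod ls A ** mexp (A - P A)"
      using \<epsilon> near by (force simp: dist_commute)
    have \<Psi>: "mexp_prod ls A \<in> H"
      using ls_def xs(1) B(1) S H(2,3) by (intro mexp_prod_mem) auto
    then have "invertible (mexp_prod ls A)" "matrix_inv (mexp_prod ls A) \<in> G"
      using G H(1) unfolding matrix_lie_group_def GL_def by auto
    then have "mexp (A - P A) = matrix_inv (mexp_prod ls A) ** g"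
      by (simp add: A(2) matrix_mul_assoc matrix_inv_left)
    also have "\<dots> \<in> G"
      using G g \<open>matrix_inv (mexp_prod ls A) \<in> G\<close> unfolding matrix_lie_group_def by blast
    finally have "mexp (A - P A) \<in> G" .
    moreover have "norm (A - P A) < e"
      using K A(1) by (smt (verit) mult.commute pos_less_divide_eq)
    ultimately have "A - P A = 0"
      using e(2) P_compl by blast
    then show "g \<in> H"
      using \<Psi> by (simp add: A(2))
  qed
  with \<open>\<epsilon> > 0\<close> show thesis
    using that by blast
qed

lemma connected_submonoid_eq:
  assumes G: "matrix_lie_group G" "connected G"
    and H: "H \<subseteq> G" "mat 1 \<in> H" "\<And>a b. a \<in> H \<Longrightarrow> b \<in> H \<Longrightarrow> a ** b \<in> H"
      "closedin (top_of_set G) H"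
    and nbhd: "\<epsilon> > 0" "\<And>g. g \<in> G \<Longrightarrow> dist g (mat 1) < \<epsilon> \<Longrightarrow> g \<in> H"
  shows "H = G"
proof -
  have "openin (top_of_set G) H"
    unfolding openin_euclidean_subtopology_iff
  proof (intro conjI ballI H(1))
    fix h
    assume "h \<in> H"
    then have h: "invertible h" "matrix_inv h \<in> G"
      using G(1) H(1) unfolding matrix_lie_group_def GL_def by auto
    have "isCont (\<lambda>g. matrix_inv h ** g) h"
      by (intro linear_continuous_at bounded_bilinear.bounded_linear_right
          bounded_bilinear_matrix_matrix_mult)
    then obtain \<delta> where "\<delta> > 0"
      and \<delta>: "\<And>g. dist g h < \<delta> \<Longrightarrow> dist (matrix_inv h ** g) (mat 1) < \<epsilon>"
      using nbhd(1) h(1) unfolding continuous_at_eps_delta by (metis matrix_inv_left)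
    have "g \<in> H" if "g \<in> G" "dist g h < \<delta>" for g
    proof -
      have "matrix_inv h ** g \<in> H"
        using G(1) h(2) that \<delta> nbhd(2) unfolding matrix_lie_group_def by blast
      then have "h ** (matrix_inv h ** g) \<in> H"
        using H(3) \<open>h \<in> H\<close> by blast
      then show ?thesis
        by (simp add: matrix_mul_assoc matrix_inv_right h(1))
    qed
    with \<open>\<delta> > 0\<close> show "\<exists>\<delta>>0. \<forall>g\<in>G. dist g h < \<delta> \<longrightarrow> g \<in> H"
      by blast
  qed
  then show ?thesis
    using G(2) H(2,4) unfolding connected_clopen by blast
qed

section \<open>Infinitesimal covariance\<close>

definition infinitesimally_covariant ::
    "(real^'n^'n \<Rightarrow> 'k::real_normed_field^'m^'m) \<Rightarrow> ('n \<Rightarrow> 'k^'m^'m)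
       \<Rightarrow> real^'n^'n \<Rightarrow> bool"
  where "infinitesimally_covariant \<tau> B X \<longleftrightarrow>
    (\<forall>j. (\<Sum>k\<in>UNIV. (X $ j $ k) *\<^sub>R B k) = B j ** dtau \<tau> X - dtau \<tau> X ** B j)"

lemma has_vector_derivative_conj_action_mexp_0:
  fixes \<tau> :: "real^'n^'n \<Rightarrow> 'k::real_normed_field^'m^'m"
  assumes one: "\<tau> (mat 1) = mat 1"
    and diff: "(\<lambda>t::real. \<tau> (mexp (t *\<^sub>R X))) differentiable (at 0)"
  shows "((\<lambda>t. conj_action \<tau> (mexp (t *\<^sub>R X)) B j) has_vector_derivative
           (\<Sum>k\<in>UNIV. (X $ j $ k) *\<^sub>R B k) + dtau \<tau> X ** B j - B j ** dtau \<tau> X) (at 0)"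
proof -
  define T where "T = (\<lambda>t::real. \<tau> (mexp (t *\<^sub>R X)))"
  define A where "A = dtau \<tau> X"
  have T: "(T has_vector_derivative A) (at 0)"
    using diff unfolding A_def dtau_def T_def by (rule vector_derivative_works[THEN iffD1])
  have "((\<lambda>t. T (- t)) has_vector_derivative - A) (at 0)"
    using vector_diff_chain_at[of uminus "-1" 0 T A] T
    by (simp add: o_def has_vector_derivative_minus)
  then have Tinv: "((\<lambda>t. \<tau> (matrix_inv (mexp (t *\<^sub>R X)))) has_vector_derivative - A)
      (at 0)"
    by (simp add: T_def matrix_inv_mexp)
  have "bounded_linear (\<lambda>M::real^'n^'n. M $ j $ k)" for k
    using bounded_linear_compose[OF bounded_linear_vec_nth bounded_linear_vec_nth] .
  then have entry: "((\<lambda>t. mexp (t *\<^sub>R X) $ j $ k) has_field_derivative X $ j $ k) (at 0)"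
    for k
    unfolding has_real_derivative_iff_has_vector_derivative
    by (rule bounded_linear.has_vector_derivative[OF _ has_vector_derivative_mexp_0])
  have "((\<lambda>t. conj_action \<tau> (mexp (t *\<^sub>R X)) B j) has_vector_derivative
      (\<Sum>k\<in>UNIV. (mat 1 $ j $ k :: real) *\<^sub>R (B k ** - A + A ** B k) + (X $ j $ k) *\<^sub>R B k))
      (at 0)"
    unfolding conj_action_def
    using has_vector_derivative_scaleR[OF entry
        bounded_bilinear.has_vector_derivative[OF bounded_bilinear_matrix_matrix_mult
          bounded_bilinear.has_vector_derivative[OF bounded_bilinear_matrix_matrix_mult
            T[unfolded T_def] has_vector_derivative_const] Tinv]]
    by (intro has_vector_derivative_sum) (simp add: one matrix_inv_mexp matrix_inv_mat_1)
  also have "(\<Sum>k\<in>UNIV. (mat 1 $ j $ k :: real) *\<^sub>R (B k ** - A + A ** B k)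
        + (X $ j $ k) *\<^sub>R B k)
      = (\<Sum>k\<in>UNIV. (X $ j $ k) *\<^sub>R B k) + A ** B j - B j ** A"
    by (simp add: sum.distrib mat_1_nth if_distrib[of "\<lambda>c. c *\<^sub>R _"]
        bounded_bilinear.minus_right[OF bounded_bilinear_matrix_matrix_mult] cong: if_cong)
  finally show ?thesis
    unfolding A_def .
qed

lemma conj_action_mexp_eq_self:
  fixes \<tau> :: "real^'n^'n \<Rightarrow> 'k::real_normed_field^'m^'m"
  assumes G: "matrix_lie_group G" and rep: "representation G \<tau>" and X: "X \<in> lie_algebra G"
    and diff: "(\<lambda>t::real. \<tau> (mexp (t *\<^sub>R X))) differentiable (at 0)"
    and infinitesimal: "infinitesimally_covariant \<tau> B X"
  shows "conj_action \<tau> (mexp (t *\<^sub>R X)) B = B"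
proof -
  define F where "F i s = conj_action \<tau> (mexp (s *\<^sub>R X)) B i" for i s
  have one: "\<tau> (mat 1) = mat 1"
    using G rep representation_mat_1 unfolding matrix_lie_group_def by blast
  have "mexp (s *\<^sub>R X) \<in> G" for s
    using X by (simp add: lie_algebra_def)
  \<comment> \<open>the curve at \<open>t + s\<close> is the image of the curve at \<open>s\<close> under a fixed linear map\<close>
  then have shift: "F j (t + s) = conj_action \<tau> (mexp (t *\<^sub>R X)) (\<lambda>i. F i s) j" for j t s
    by (simp add: F_def mexp_scaleR_add conj_action_matrix_mult[OF G rep])
  have "(F i has_vector_derivative 0) (at 0)" for i
    using has_vector_derivative_conj_action_mexp_0[OF one diff, of B i] infinitesimal
    by (simp add: F_def[abs_def] infinitesimally_covariant_def)
  then have "((\<lambda>s. F j (t + s)) has_vector_derivative 0) (at ((\<lambda>u. u - t) t))" for j t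
    unfolding shift
    using has_vector_derivative_conj_action[of F "\<lambda>_. 0" 0 \<tau> "mexp (t *\<^sub>R X)" j]
    by (simp add: conj_action_def)
  moreover have "((\<lambda>u. u - t) has_vector_derivative 1) (at t)" for t
    by (auto intro!: derivative_eq_intros)
  ultimately have "(F j has_vector_derivative 0) (at t)" for j t
    using vector_diff_chain_at by (fastforce simp: o_def)
  then have "F j t = F j 0" for j
    by (metis has_vector_derivative_zero_constant[OF convex_UNIV] UNIV_I)
  then show ?thesis
    by (simp add: fun_eq_iff F_def conj_action_mat_1[of \<tau>, OF one])
qed

lemma covariant_imp_infinitesimally_covariant:
  fixes \<tau> :: "real^'n^'n \<Rightarrow> 'k::real_normed_field^'m^'m"
  assumes G: "matrix_lie_group G" and rep: "representation G \<tau>" and X: "X \<in> lie_algebra G"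
    and diff: "(\<lambda>t::real. \<tau> (mexp (t *\<^sub>R X))) differentiable (at 0)"
    and cov: "covariant G \<tau> B"
  shows "infinitesimally_covariant \<tau> B X"
  unfolding infinitesimally_covariant_def
proof
  fix j
  have one: "\<tau> (mat 1) = mat 1"
    using G rep representation_mat_1 unfolding matrix_lie_group_def by blast
  have "mexp (t *\<^sub>R X) \<in> G" for t
    using X by (simp add: lie_algebra_def)
  with cov have "conj_action \<tau> (mexp (t *\<^sub>R X)) B j = B j" for t
    by (simp add: covariant_iff_conj_action)
  then have "((\<lambda>t. conj_action \<tau> (mexp (t *\<^sub>R X)) B j) has_vector_derivative 0) (at 0)"
    by simp
  from vector_derivative_unique_at[OF has_vector_derivative_conj_action_mexp_0[OF one diff] this]
  show "(\<Sum>k\<in>UNIV. (X $ j $ k) *\<^sub>R B k) = B j ** dtau \<tau> X - dtau \<tau> X ** B j"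
    by (simp add: algebra_simps)
qed

lemma closedin_conj_action_stabiliser:
  fixes \<tau> :: "real^'n^'n \<Rightarrow> 'k::real_normed_field^'m^'m"
  assumes G: "matrix_lie_group G" and rep: "representation G \<tau>"
  shows "closedin (top_of_set G) {g \<in> G. conj_action \<tau> g B = B}"
proof -
  have "continuous_on G (\<lambda>g::real^'n^'n. g $ j $ k)" for j k
    by (intro linear_continuous_on
        bounded_linear_compose[OF bounded_linear_vec_nth bounded_linear_vec_nth])
  moreover have "continuous_on G \<tau>"
    using rep by (simp add: representation_def)
  ultimately have
    "continuous_on G (\<lambda>g. \<chi> j. (\<Sum>k\<in>UNIV. (g $ j $ k) *\<^sub>R (\<tau> g ** B k)) - B j ** \<tau> g)"
    by (intro continuous_intros
        bounded_bilinear.continuous_on[OF bounded_bilinear_matrix_matrix_mult])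
  moreover have "{g \<in> G. conj_action \<tau> g B = B}
      = {g \<in> G. (\<chi> j. (\<Sum>k\<in>UNIV. (g $ j $ k) *\<^sub>R (\<tau> g ** B k)) - B j ** \<tau> g) = 0}"
    by (subst vec_eq_iff) (auto simp: fun_eq_iff conj_action_fixes_iff[OF G rep])
  ultimately show ?thesis
    using continuous_closedin_preimage_constant by auto
qed

lemma covariant_if_infinitesimally_covariant:
  fixes \<tau> :: "real^'n^'n \<Rightarrow> 'k::real_normed_field^'m^'m"
  assumes G: "matrix_lie_group G" "connected G" and rep: "representation G \<tau>"
    and S: "S \<subseteq> lie_algebra G" "lie_algebra G \<subseteq> span S"
    and diff: "\<And>X. X \<in> S \<Longrightarrow> (\<lambda>t::real. \<tau> (mexp (t *\<^sub>R X))) differentiable (at 0)"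
    and infinitesimal: "\<And>X. X \<in> S \<Longrightarrow> infinitesimally_covariant \<tau> B X"
  shows "covariant G \<tau> B"
proof -
  define H where "H = {g \<in> G. conj_action \<tau> g B = B}"
  have "mat 1 \<in> G"
    using G(1) by (simp add: matrix_lie_group_def)
  then have H1: "mat 1 \<in> H"
    using conj_action_mat_1 representation_mat_1[OF rep] by (simp add: H_def)
  have Hmult: "a ** b \<in> H" if "a \<in> H" "b \<in> H" for a b
    using that G(1) conj_action_matrix_mult[OF G(1) rep]
    by (auto simp: H_def matrix_lie_group_def)
  have "mexp (t *\<^sub>R X) \<in> H" if "X \<in> S" for X t
    using that S(1) diff infinitesimal conj_action_mexp_eq_self[OF G(1) rep]
    by (auto simp: H_def lie_algebra_def)
  then obtain \<epsilon> where "\<epsilon> > 0" "\<And>g. g \<in> G \<Longrightarrow> dist g (mat 1) < \<epsilon> \<Longrightarrow> g \<in> H"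
    using submonoid_contains_neighbourhood_of_mat_1[OF G(1) _ H1 Hmult _ S(2)]
    by (auto simp: H_def)
  moreover have "closedin (top_of_set G) H"
    unfolding H_def by (rule closedin_conj_action_stabiliser[OF G(1) rep])
  ultimately have "H = G"
    using connected_submonoid_eq[OF G _ H1 Hmult] by (auto simp: H_def)
  then show ?thesis
    by (auto simp: covariant_iff_conj_action H_def)
qed

theorem lemma2p4:
  fixes G :: "(real^'D^'D) set"
    and L :: "nat \<Rightarrow> real^'D^'D" and l :: nat
    and \<tau> :: "real^'D^'D \<Rightarrow> 'k::real_normed_field^'N^'N"
    and B :: "'D \<Rightarrow> 'k^'N^'N"
  assumes "matrix_lie_group G"
    and "\<forall>\<alpha>\<in>{1..l}. L \<alpha> \<in> lie_algebra G"
    and "span (L ` {1..l}) = lie_algebra G"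
    and "representation G \<tau>"
    and "\<forall>X\<in>lie_algebra G. (\<lambda>t::real. \<tau> (mexp (t *\<^sub>R X))) differentiable (at 0)"
  shows "(covariant G \<tau> B \<longrightarrow>
           (\<forall>\<alpha>\<in>{1..l}. \<forall>j. (\<Sum>k\<in>UNIV. (L \<alpha> $ j $ k) *\<^sub>R B k)
                = B j ** dtau \<tau> (L \<alpha>) - dtau \<tau> (L \<alpha>) ** B j))
       \<and> (connected G \<longrightarrow>
           (\<forall>\<alpha>\<in>{1..l}. \<forall>j. (\<Sum>k\<in>UNIV. (L \<alpha> $ j $ k) *\<^sub>R B k)
                = B j ** dtau \<tau> (L \<alpha>) - dtau \<tau> (L \<alpha>) ** B j)
           \<longrightarrow> covariant G \<tau> B)"
proof (intro conjI impI)
  assume "covariant G \<tau> B"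
  then show "\<forall>\<alpha>\<in>{1..l}. \<forall>j. (\<Sum>k\<in>UNIV. (L \<alpha> $ j $ k) *\<^sub>R B k)
      = B j ** dtau \<tau> (L \<alpha>) - dtau \<tau> (L \<alpha>) ** B j"
    using covariant_imp_infinitesimally_covariant[OF assms(1,4)] assms(2,5)
    unfolding infinitesimally_covariant_def by blast
next
  assume "connected G" and "\<forall>\<alpha>\<in>{1..l}. \<forall>j. (\<Sum>k\<in>UNIV. (L \<alpha> $ j $ k) *\<^sub>R B k)
      = B j ** dtau \<tau> (L \<alpha>) - dtau \<tau> (L \<alpha>) ** B j"
  then show "covariant G \<tau> B"
    using assms(2,3,5)
    by (intro covariant_if_infinitesimally_covariant[OF assms(1) \<open>connected G\<close> assms(4),
          of "L ` {1..l}"]) (auto simp: infinitesimally_covariant_def)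
qed

end
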